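(* For distinct $a,b,c,d$, in $A(\mathcal{H}^+)$: (i) $\mathcal{M}_{ab}*\bar{\mathcal{M}}_{cd}=0$ and $\bar{\mathcal{M}}_{cd}*\mathcal{M}_{ab}=0$; (ii) $[\Lambda_{ab}]*[\Lambda_{cd}]=[S_{ab}]*[S_{cd}]$.
   Context: $\mathfrak{h}$ is an $\ell$-dimensional complex space with orthonormal basis $h_1,\dots,h_\ell$; $\mathcal{H}=M(1,0)$ the free bosonic vertex operator algebra generated by Heisenberg modes $h(n)$ on vacuum $\mathbf{1}$; $\mathcal{H}^+$ the fixed points of the automorphism induced by $h\mapsto-h$; $A(\mathcal{H}^+)=\mathcal{H}^+/O(\mathcal{H}^+)$ Zhu's algebra ($O$ spanned by $u\circ v=\sum_{i\ge0}\binom{\mathrm{wt}\,u}{i}u_{i-2}v$, product induced by $u*v=\sum_{i\ge0}\binom{\mathrm{wt}\,u}{i}u_{i-1}v$), $[u]=u+O(\mathcal{H}^+)$. For distinct $x,y$: $S_{xy}(1,m)=h_x(-1)h_y(-m)\mathbf{1}$, $S_{xy}=S_{xy}(1,1)$, $E^u_{xy}=5S_{xy}(1,2)+25S_{xy}(1,3)+36S_{xy}(1,4)+16S_{xy}(1,5)$, $E^t_{xy}=-16\big(3S_{xy}(1,2)+14S_{xy}(1,3)+19S_{xy}(1,4)+8S_{xy}(1,5)\big)$, $\Lambda_{xy}=45S_{xy}(1,2)+190S_{xy}(1,3)+240S_{xy}(1,4)+96S_{xy}(1,5)$. $\mathcal{M}_{xy}$ is the span of $[E^u_{xy}],[E^u_{yx}],[E^t_{xy}],[E^t_{yx}]$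 and $\bar{\mathcal{M}}_{xy}=\mathcal{M}_{xy}+\mathbb{C}[\Lambda_{xy}]$. *)

theory Defs
  imports Complex_Main "HOL-Library.Multiset" "HOL-Library.Function_Algebras" "HOL-Library.Product_Lexorder"
begin

text \<open>Concrete model of the Heisenberg (free boson) VOA M(1,0) on an l-dimensional space
with orthonormal basis h_0,...,h_(l-1).  A Fock monomial h_{i1}(-n1)...h_{ik}(-nk)1 (n_j >= 1)
is a multiset of pairs (i,n); a state is a finitely supported complex function on monomials.\<close>

type_synonym mon = "(nat \<times> nat) multiset"
type_synonym vec = "mon \<Rightarrow> complex"

definition supp :: "vec \<Rightarrow> mon set" where
  "supp v = {m. v m \<noteq> 0}"

definition sc :: "complex \<Rightarrow> vec \<Rightarrow> vec" where
  "sc c v = (\<lambda>m. c * v m)"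

definition mono :: "mon \<Rightarrow> vec" where
  "mono m = (\<lambda>m'. if m' = m then 1 else 0)"

definition vac :: vec where
  "vac = mono {#}"

definition lin :: "(mon \<Rightarrow> vec) \<Rightarrow> vec \<Rightarrow> vec" where
  "lin f v = (\<lambda>w. \<Sum>m\<in>supp v. v m * f m w)"

text \<open>Heisenberg mode h_i(n) on a basis monomial: creation for n<0, n times derivative for n>0,
zero for n=0 (charge zero module), so that [h_i(m),h_j(n)] = m delta_ij delta_(m+n,0).\<close>
definition hmon :: "nat \<Rightarrow> int \<Rightarrow> mon \<Rightarrow> vec" where
  "hmon i n m =
     (if n < 0 then mono (add_mset (i, nat (- n)) m)
      else if n = 0 then (\<lambda>_. 0)
      else sc (of_int n * of_nat (count m (i, nat n))) (mono (m - {#(i, nat n)#})))"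

definition hmode :: "nat \<Rightarrow> int \<Rightarrow> vec \<Rightarrow> vec" where
  "hmode i n v = lin (hmon i n) v"

definition apply_ops :: "(nat \<times> int) list \<Rightarrow> vec \<Rightarrow> vec" where
  "apply_ops ops w = foldr (\<lambda>(i, n) acc. hmode i n acc) ops w"

text \<open>Normally ordered product of modes applied to a basis monomial:
annihilation modes (n >= 0) act first, creation modes (n < 0) afterwards.\<close>
definition normal_apply :: "(nat \<times> int) list \<Rightarrow> mon \<Rightarrow> vec" where
  "normal_apply ops b =
     apply_ops (filter (\<lambda>(i, n). n < 0) ops) (apply_ops (filter (\<lambda>(i, n). 0 \<le> n) ops) (mono b))"

text \<open>Mode u_p of the vertex operator Y(u,z) = :prod_j d^(n_j-1)h_{i_j}(z)/(n_j-1)!: for a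
basis monomial u, applied to a basis monomial b.  The coefficient of z^(-m-n) in
d^(n-1)h(z)/(n-1)! is binom(-m-1,n-1) h(m).  The sum over mode tuples is infinite in
principle, but only tuples in the box [-B,B]^k can contribute when acting on b.\<close>
definition ymon :: "mon \<Rightarrow> int \<Rightarrow> mon \<Rightarrow> vec" where
  "ymon a p b =
    (let fs = sorted_list_of_multiset a;
         k = length fs;
         N = sum_list (map snd fs);
         W = Max (insert 0 (snd ` set_mset b));
         B = \<bar>p\<bar> + int N + int k * (int W + 1) + 1
     in (\<lambda>w. \<Sum>ms\<in>{ms :: int list. length ms = k \<and> set ms \<subseteq> {-B..B}}.
            if (\<Sum>j<k. ms ! j + int (snd (fs ! j))) = p + 1
            then (\<Prod>j<k. (of_int (- ms ! j - 1) :: complex) gchoose (snd (fs ! j) - 1))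
                 * normal_apply (zip (map fst fs) ms) b w
            else 0))"

definition Ymode :: "vec \<Rightarrow> int \<Rightarrow> vec \<Rightarrow> vec" where
  "Ymode u p v = (\<lambda>w. \<Sum>a\<in>supp u. \<Sum>b\<in>supp v. u a * v b * ymon a p b w)"

definition wt :: "mon \<Rightarrow> nat" where
  "wt m = sum_mset (image_mset snd m)"

definition wcomp :: "nat \<Rightarrow> vec \<Rightarrow> vec" where
  "wcomp d u = (\<lambda>m. if wt m = d then u m else 0)"

definition homogeneous :: "vec \<Rightarrow> bool" where
  "homogeneous u \<longleftrightarrow> (\<exists>d. \<forall>m. u m \<noteq> 0 \<longrightarrow> wt m = d)"

text \<open>Zhu's product u*v = sum_i binom(wt u,i) u_(i-1) v and u o v = sum_i binom(wt u,i) u_(i-2) v,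
for homogeneous u, extended linearly in u.\<close>
definition zstar :: "vec \<Rightarrow> vec \<Rightarrow> vec" where
  "zstar u v = (\<lambda>w. \<Sum>d\<in>wt ` supp u. \<Sum>i\<le>d. of_nat (d choose i) * Ymode (wcomp d u) (int i - 1) v w)"

definition zcirc :: "vec \<Rightarrow> vec \<Rightarrow> vec" where
  "zcirc u v = (\<lambda>w. \<Sum>d\<in>wt ` supp u. \<Sum>i\<le>d. of_nat (d choose i) * Ymode (wcomp d u) (int i - 2) v w)"

definition cspan :: "vec set \<Rightarrow> vec set" where
  "cspan S = {v. \<exists>F c. finite F \<and> F \<subseteq> S \<and> v = (\<lambda>m. \<Sum>x\<in>F. c x * x m)}"

text \<open>The VOA H = M(1,0) for an l-dimensional h (indices < l), the involution theta induced
by h -> -h, and the fixed point subVOA H^+.\<close>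
definition Hspace :: "nat \<Rightarrow> vec set" where
  "Hspace l = {v. finite (supp v) \<and> (\<forall>m\<in>supp v. \<forall>x\<in>set_mset m. fst x < l \<and> 1 \<le> snd x)}"

definition theta :: "vec \<Rightarrow> vec" where
  "theta v = (\<lambda>m. (-1) ^ size m * v m)"

definition Hplus :: "nat \<Rightarrow> vec set" where
  "Hplus l = {v \<in> Hspace l. theta v = v}"

text \<open>O(H^+); the class equation [u]*[v] = [w] in A(H^+) means zstar u v - w \<in> Ozhu l.\<close>
definition Ozhu :: "nat \<Rightarrow> vec set" where
  "Ozhu l = cspan {zcirc u v | u v. u \<in> Hplus l \<and> v \<in> Hplus l \<and> homogeneous u}"

definition Sv :: "nat \<Rightarrow> nat \<Rightarrow> nat \<Rightarrow> vec" where
  "Sv x y m = hmode x (-1) (hmode y (- int m) vac)"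

definition Eu :: "nat \<Rightarrow> nat \<Rightarrow> vec" where
  "Eu x y = sc 5 (Sv x y 2) + sc 25 (Sv x y 3) + sc 36 (Sv x y 4) + sc 16 (Sv x y 5)"

definition Et :: "nat \<Rightarrow> nat \<Rightarrow> vec" where
  "Et x y = sc (-16) (sc 3 (Sv x y 2) + sc 14 (Sv x y 3) + sc 19 (Sv x y 4) + sc 8 (Sv x y 5))"

definition Lam :: "nat \<Rightarrow> nat \<Rightarrow> vec" where
  "Lam x y = sc 45 (Sv x y 2) + sc 190 (Sv x y 3) + sc 240 (Sv x y 4) + sc 96 (Sv x y 5)"

text \<open>Representatives of M_xy and of Mbar_xy (spans of the classes = classes of the spans).\<close>
definition Mspace :: "nat \<Rightarrow> nat \<Rightarrow> vec set" where
  "Mspace x y = cspan {Eu x y, Eu y x, Et x y, Et y x}"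

definition Mbar :: "nat \<Rightarrow> nat \<Rightarrow> vec set" where
  "Mbar x y = cspan {Eu x y, Eu y x, Et x y, Et y x, Lam x y}"

end

theory Submission
  imports Defs
begin

text \<open>
  Write \<open>P(p,q,r,s)\<close> for the state \<open>h_a(-p)h_b(-q)h_c(-r)h_d(-s)1\<close>. Since \<open>a, b\<close> do not occur
  in \<open>h_c(-r)h_d(-s)1\<close>, only the creation parts of the vertex operators act, and in Zhu's algebra
  \<open>h_a(-p)h_b(-q)1 * h_c(-r)h_d(-s)1 = P(p,q,r,s)\<close>, while the circle product of the same pair is
  \<open>p P(p+1,q,r,s) + q P(p,q+1,r,s) + (p+q) P(p,q,r,s)\<close>. Combining the circle products of the three
  pairs drawn from \<open>{a, b, c}\<close> isolates \<open>P(p+1,q,r,s) + P(p,q,r,s) \<in> O(H\<^sup>+)\<close>, so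
  \<open>P(p,q,r,s) \<equiv> (-1)\<^bsup>p+q+r+s\<^esup> P(1,1,1,1)\<close>. By bilinearity, \<open>u * v \<equiv> \<epsilon>(u) \<epsilon>(v) P(1,1,1,1)\<close> for
  \<open>u, v\<close> spanned by such pair states, where \<open>\<epsilon>\<close> sums the coefficients with the signs
  \<open>(-1)\<^bsup>wt\<^esup>\<close>. Finally \<open>\<epsilon>\<close> vanishes on \<open>E\<^sup>u\<close> and \<open>E\<^sup>t\<close> and equals \<open>1\<close> on \<open>\<Lambda>\<close> and \<open>S\<close>.
\<close>

lemma supp_mono [simp]: "supp (mono m) = {m}"
  by (auto simp: supp_def mono_def)

lemma hmode_mono [simp]: "hmode i n (mono m) = hmon i n m"
  by (simp add: hmode_def lin_def fun_eq_iff) (simp add: mono_def)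

lemma hmode_zero [simp]: "hmode i n (\<lambda>_. 0) = (\<lambda>_. 0)"
  by (simp add: hmode_def lin_def supp_def)

lemma hmon_creation: "n < 0 \<Longrightarrow> hmon i n m = mono (add_mset (i, nat (- n)) m)"
  by (simp add: hmon_def)

lemma hmon_annihilation_free:
  assumes "i \<notin> fst ` set_mset m" "0 \<le> n"
  shows "hmon i n m = (\<lambda>_. 0)"
proof -
  have "count m (i, nat n) = 0"
    using assms(1) by (force simp: count_eq_zero_iff)
  then show ?thesis
    using assms(2) by (auto simp: hmon_def sc_def)
qed

lemma normal_apply_two_free:
  assumes "i \<notin> fst ` set_mset m" "j \<notin> fst ` set_mset m"
  shows "normal_apply [(i, x), (j, y)] m =
    (if x < 0 \<and> y < 0 then mono (add_mset (i, nat (- x)) (add_mset (j, nat (- y)) m)) else (\<lambda>_. 0))"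
  using hmon_annihilation_free[OF assms(1)] hmon_annihilation_free[OF assms(2)]
  by (cases "x < 0"; cases "y < 0") (auto simp: normal_apply_def apply_ops_def hmon_creation)

section \<open>Modes of the vertex operator of a pair state\<close>

lemma sum_lists_length_two:
  "(\<Sum>ms\<in>{ms. length ms = 2 \<and> set ms \<subseteq> A}. f ms) = (\<Sum>(x, y)\<in>A \<times> A. f [x, y])"
proof -
  have "bij_betw (\<lambda>(x, y). [x, y]) (A \<times> A) {ms. length ms = 2 \<and> set ms \<subseteq> A}"
    by (rule bij_betwI'; fastforce simp: numeral_2_eq_2 length_Suc_conv)
  from sum.reindex_bij_betw[OF this, of f] show ?thesis
    by (simp add: case_prod_unfold)
qed

text \<open>For \<open>m < 0\<close> this is \<open>binom(-m-1, n-1)\<close>, the coefficient of \<open>h(m)\<close> in the vertex operator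
  of \<open>h(-n)1\<close>.\<close>

definition mode_coeff :: "int \<Rightarrow> nat \<Rightarrow> complex" where
  "mode_coeff m n = of_nat (nat (- m - 1) choose (n - 1))"

lemma mode_coeff_eq_0: "- int n < m \<Longrightarrow> m < 0 \<Longrightarrow> mode_coeff m n = 0"
  by (simp add: mode_coeff_def binomial_eq_0_iff nat_less_iff)

lemma mode_coeff_lowest: "1 \<le> n \<Longrightarrow> mode_coeff (- int n) n = 1"
  by (simp add: mode_coeff_def nat_diff_distrib')

lemma mode_coeff_next: "1 \<le> n \<Longrightarrow> mode_coeff (- int n - 1) n = of_nat n"
  using binomial_symmetric[of 1 n] by (simp add: mode_coeff_def)

lemma gchoose_of_negative:
  "m < 0 \<Longrightarrow> (of_int (- m - 1) :: complex) gchoose k = of_nat (nat (- m - 1) choose k)"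
proof -
  assume "m < 0"
  then have "(of_int (- m - 1) :: complex) = of_nat (nat (- m - 1))"
    by simp
  then show ?thesis
    by (simp add: binomial_gbinomial)
qed

lemma ymon_sorted_pair_box_sum:
  assumes sorted: "sorted_list_of_multiset \<alpha> = [(i, n), (j, k)]"
    and free: "i \<notin> fst ` set_mset \<beta>" "j \<notin> fst ` set_mset \<beta>"
  obtains B where "\<bar>p\<bar> + int n + int k + 1 \<le> B"
    and "ymon \<alpha> p \<beta> = (\<lambda>w. \<Sum>(x, y)\<in>{-B..B} \<times> {-B..B}.
           if x + y + int n + int k = p + 1 \<and> x < 0 \<and> y < 0
           then mode_coeff x n * mode_coeff y k * mono (add_mset (i, nat (- x)) (add_mset (j, nat (- y)) \<beta>)) w
           else 0)"
proof
  define B where "B = \<bar>p\<bar> + int (n + k) + 2 * (int (Max (insert 0 (snd ` set_mset \<beta>))) + 1) + 1"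
  show "\<bar>p\<bar> + int n + int k + 1 \<le> B"
    by (simp add: B_def)
  show "ymon \<alpha> p \<beta> = (\<lambda>w. \<Sum>(x, y)\<in>{-B..B} \<times> {-B..B}.
           if x + y + int n + int k = p + 1 \<and> x < 0 \<and> y < 0
           then mode_coeff x n * mode_coeff y k * mono (add_mset (i, nat (- x)) (add_mset (j, nat (- y)) \<beta>)) w
           else 0)" (is "_ = ?rhs")
  proof
    fix w
    have two: "length [(i, n), (j, k)] = 2" by simp
    have bound: "\<bar>p\<bar> + int (sum_list (map snd [(i, n), (j, k)]))
        + int (length [(i, n), (j, k)]) * (int (Max (insert 0 (snd ` set_mset \<beta>))) + 1) + 1 = B"
      by (simp add: B_def)
    show "ymon \<alpha> p \<beta> w = ?rhs w"
      unfolding ymon_def Let_def sorted bound unfolding two sum_lists_length_two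
      by (rule sum.cong[OF refl])
        (auto simp: numeral_2_eq_2 normal_apply_two_free[OF free] gchoose_of_negative mode_coeff_def
          simp del: of_int_diff of_int_minus)
  qed
qed

lemma ymon_sorted_pair_eq_sum:
  assumes sorted: "sorted_list_of_multiset \<alpha> = [(i, n), (j, k)]"
    and free: "i \<notin> fst ` set_mset \<beta>" "j \<notin> fst ` set_mset \<beta>"
    and pos: "1 \<le> n" "1 \<le> k"
  shows "ymon \<alpha> p \<beta> = (\<lambda>w. \<Sum>(x, y)\<in>{(x, y). x \<le> - int n \<and> y \<le> - int k \<and> x + y + int n + int k = p + 1}.
           mode_coeff x n * mode_coeff y k * mono (add_mset (i, nat (- x)) (add_mset (j, nat (- y)) \<beta>)) w)"
proof -
  obtain B where B: "\<bar>p\<bar> + int n + int k + 1 \<le> B"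
    and ymon: "ymon \<alpha> p \<beta> = (\<lambda>w. \<Sum>(x, y)\<in>{-B..B} \<times> {-B..B}.
           if x + y + int n + int k = p + 1 \<and> x < 0 \<and> y < 0
           then mode_coeff x n * mode_coeff y k * mono (add_mset (i, nat (- x)) (add_mset (j, nat (- y)) \<beta>)) w
           else 0)"
    using ymon_sorted_pair_box_sum[OF sorted free] .
  let ?term = "\<lambda>x y w. mode_coeff x n * mode_coeff y k * mono (add_mset (i, nat (- x)) (add_mset (j, nat (- y)) \<beta>)) w"
  let ?S = "{(x, y). x \<le> - int n \<and> y \<le> - int k \<and> x + y + int n + int k = p + 1}"
  have S_box: "?S \<subseteq> {-B..B} \<times> {-B..B}"
    using B by auto
  have vanish: "(if x + y + int n + int k = p + 1 \<and> x < 0 \<and> y < 0 then ?term x y w else 0) = 0"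
    if "(x, y) \<notin> ?S" for x y w
  proof (cases "x + y + int n + int k = p + 1 \<and> x < 0 \<and> y < 0")
    case True
    with that have "- int n < x \<or> - int k < y"
      by auto
    with True show ?thesis
      by (auto simp: mode_coeff_eq_0)
  next
    case False
    then show ?thesis
      by (rule if_not_P)
  qed
  show ?thesis
  proof
    fix w
    have "ymon \<alpha> p \<beta> w = (\<Sum>(x, y)\<in>?S. if x + y + int n + int k = p + 1 \<and> x < 0 \<and> y < 0 then ?term x y w else 0)"
      unfolding ymon by (rule sum.mono_neutral_right) (use S_box vanish in auto)
    also have "\<dots> = (\<Sum>(x, y)\<in>?S. ?term x y w)"
      using pos by (intro sum.cong) auto
    finally show "ymon \<alpha> p \<beta> w = (\<Sum>(x, y)\<in>?S. ?term x y w)" .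
  qed
qed

lemma ymon_sorted_pair_values:
  assumes sorted: "sorted_list_of_multiset \<alpha> = [(i, n), (j, k)]"
    and free: "i \<notin> fst ` set_mset \<beta>" "j \<notin> fst ` set_mset \<beta>"
    and pos: "1 \<le> n" "1 \<le> k"
  shows "ymon \<alpha> (-1) \<beta> = mono (add_mset (i, n) (add_mset (j, k) \<beta>))"
    and "ymon \<alpha> (-2) \<beta> = sc (of_nat n) (mono (add_mset (i, n + 1) (add_mset (j, k) \<beta>)))
                           + sc (of_nat k) (mono (add_mset (i, n) (add_mset (j, k + 1) \<beta>)))"
    and "0 \<le> p \<Longrightarrow> ymon \<alpha> p \<beta> = (\<lambda>_. 0)"
proof -
  note ymon = ymon_sorted_pair_eq_sum[OF sorted free pos]
  have "{(x, y). x \<le> - int n \<and> y \<le> - int k \<and> x + y + int n + int k = -1 + 1} = {(- int n, - int k)}"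
    by auto
  then show "ymon \<alpha> (-1) \<beta> = mono (add_mset (i, n) (add_mset (j, k) \<beta>))"
    using pos by (simp add: ymon mode_coeff_lowest)
  have "{(x, y). x \<le> - int n \<and> y \<le> - int k \<and> x + y + int n + int k = -2 + 1}
      = {(- int n - 1, - int k), (- int n, - int k - 1)}"
    by auto
  then show "ymon \<alpha> (-2) \<beta> = sc (of_nat n) (mono (add_mset (i, n + 1) (add_mset (j, k) \<beta>)))
                           + sc (of_nat k) (mono (add_mset (i, n) (add_mset (j, k + 1) \<beta>)))"
    using pos by (simp add: ymon mode_coeff_lowest mode_coeff_next sc_def fun_eq_iff nat_add_distrib)
  show "ymon \<alpha> p \<beta> = (\<lambda>_. 0)" if "0 \<le> p"
  proof -
    have "{(x, y). x \<le> - int n \<and> y \<le> - int k \<and> x + y + int n + int k = p + 1} = {}"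
      using that by auto
    then show ?thesis
      unfolding ymon by (simp only: sum.empty)
  qed
qed

lemma sorted_list_of_multiset_pair:
  "sorted_list_of_multiset {#a, b#} = [a, b] \<or> sorted_list_of_multiset {#a, b :: 'a :: linorder#} = [b, a]"
  by simp

lemma ymon_pair:
  assumes free: "i \<notin> fst ` set_mset \<beta>" "j \<notin> fst ` set_mset \<beta>"
    and pos: "1 \<le> n" "1 \<le> k"
  shows ymon_pair_minus_one: "ymon {#(i, n), (j, k)#} (-1) \<beta> = mono (add_mset (i, n) (add_mset (j, k) \<beta>))"
    and ymon_pair_minus_two: "ymon {#(i, n), (j, k)#} (-2) \<beta>
      = sc (of_nat n) (mono (add_mset (i, n + 1) (add_mset (j, k) \<beta>)))
      + sc (of_nat k) (mono (add_mset (i, n) (add_mset (j, k + 1) \<beta>)))"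
    and ymon_pair_nonneg: "0 \<le> p \<Longrightarrow> ymon {#(i, n), (j, k)#} p \<beta> = (\<lambda>_. 0)"
proof -
  have swap: "{#(i, n), (j, k)#} = {#(j, k), (i, n)#}"
    by (rule add_mset_commute)
  consider (ordered) "sorted_list_of_multiset {#(i, n), (j, k)#} = [(i, n), (j, k)]"
    | (swapped) "sorted_list_of_multiset {#(j, k), (i, n)#} = [(j, k), (i, n)]"
    using sorted_list_of_multiset_pair[of "(i, n)" "(j, k)"] unfolding swap by blast
  note order = this
  from order show "ymon {#(i, n), (j, k)#} (-1) \<beta> = mono (add_mset (i, n) (add_mset (j, k) \<beta>))"
  proof cases
    case ordered
    show ?thesis by (rule ymon_sorted_pair_values(1)[OF ordered free pos])
  next
    case swapped
    show ?thesis
      unfolding swap ymon_sorted_pair_values(1)[OF swapped free(2,1) pos(2,1)]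
      by (simp add: add_mset_commute)
  qed
  from order show "ymon {#(i, n), (j, k)#} (-2) \<beta>
      = sc (of_nat n) (mono (add_mset (i, n + 1) (add_mset (j, k) \<beta>)))
      + sc (of_nat k) (mono (add_mset (i, n) (add_mset (j, k + 1) \<beta>)))"
  proof cases
    case ordered
    show ?thesis by (rule ymon_sorted_pair_values(2)[OF ordered free pos])
  next
    case swapped
    show ?thesis
      unfolding swap ymon_sorted_pair_values(2)[OF swapped free(2,1) pos(2,1)]
      by (simp add: add_mset_commute add.commute)
  qed
  show "ymon {#(i, n), (j, k)#} p \<beta> = (\<lambda>_. 0)" if "0 \<le> p"
    using order
  proof cases
    case ordered
    show ?thesis by (rule ymon_sorted_pair_values(3)[OF ordered free pos that])
  next
    case swapped
    show ?thesis
      unfolding swap by (rule ymon_sorted_pair_values(3)[OF swapped free(2,1) pos(2,1) that])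
  qed
qed

lemma wt_pair [simp]: "wt {#(i, n), (j, k)#} = n + k"
  by (simp add: wt_def)

lemma Ymode_mono [simp]: "Ymode (mono \<alpha>) p (mono \<beta>) = ymon \<alpha> p \<beta>"
  by (simp add: Ymode_def fun_eq_iff) (simp add: mono_def)

lemma wcomp_mono [simp]: "wcomp (wt \<alpha>) (mono \<alpha>) = mono \<alpha>"
  by (auto simp: wcomp_def mono_def)

lemma zstar_mono:
  "zstar (mono \<alpha>) (mono \<beta>) = (\<lambda>w. \<Sum>i\<le>wt \<alpha>. of_nat (wt \<alpha> choose i) * ymon \<alpha> (int i - 1) \<beta> w)"
  by (simp add: zstar_def)

lemma zcirc_mono:
  "zcirc (mono \<alpha>) (mono \<beta>) = (\<lambda>w. \<Sum>i\<le>wt \<alpha>. of_nat (wt \<alpha> choose i) * ymon \<alpha> (int i - 2) \<beta> w)"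
  by (simp add: zcirc_def)

lemma zstar_pair:
  assumes "i \<notin> fst ` set_mset \<beta>" "j \<notin> fst ` set_mset \<beta>" "1 \<le> n" "1 \<le> k"
  shows "zstar (mono {#(i, n), (j, k)#}) (mono \<beta>) = mono (add_mset (i, n) (add_mset (j, k) \<beta>))"
proof
  fix w
  have "zstar (mono {#(i, n), (j, k)#}) (mono \<beta>) w
      = (\<Sum>m\<in>{0}. of_nat ((n + k) choose m) * ymon {#(i, n), (j, k)#} (int m - 1) \<beta> w)"
    unfolding zstar_mono wt_pair
    by (rule sum.mono_neutral_right) (auto simp: ymon_pair_nonneg[OF assms])
  then show "zstar (mono {#(i, n), (j, k)#}) (mono \<beta>) w = mono (add_mset (i, n) (add_mset (j, k) \<beta>)) w"
    by (simp add: ymon_pair_minus_one[OF assms])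
qed

lemma zcirc_pair:
  assumes "i \<notin> fst ` set_mset \<beta>" "j \<notin> fst ` set_mset \<beta>" "1 \<le> n" "1 \<le> k"
  shows "zcirc (mono {#(i, n), (j, k)#}) (mono \<beta>)
    = sc (of_nat n) (mono (add_mset (i, n + 1) (add_mset (j, k) \<beta>)))
    + sc (of_nat k) (mono (add_mset (i, n) (add_mset (j, k + 1) \<beta>)))
    + sc (of_nat (n + k)) (mono (add_mset (i, n) (add_mset (j, k) \<beta>)))"
proof
  fix w
  have "zcirc (mono {#(i, n), (j, k)#}) (mono \<beta>) w
      = (\<Sum>m\<in>{0, 1}. of_nat ((n + k) choose m) * ymon {#(i, n), (j, k)#} (int m - 2) \<beta> w)"
    unfolding zcirc_mono wt_pair
    by (rule sum.mono_neutral_right) (use assms in \<open>auto simp: ymon_pair_nonneg[OF assms]\<close>)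
  then show "zcirc (mono {#(i, n), (j, k)#}) (mono \<beta>) w = (sc (of_nat n) (mono (add_mset (i, n + 1) (add_mset (j, k) \<beta>)))
    + sc (of_nat k) (mono (add_mset (i, n) (add_mset (j, k + 1) \<beta>)))
    + sc (of_nat (n + k)) (mono (add_mset (i, n) (add_mset (j, k) \<beta>)))) w"
    by (simp add: ymon_pair_minus_one[OF assms] ymon_pair_minus_two[OF assms] sc_def)
qed

lemma supp_wcomp: "supp (wcomp d u) = {\<alpha> \<in> supp u. wt \<alpha> = d}"
  by (auto simp: supp_def wcomp_def)

lemma zstar_expand:
  assumes fin: "finite (supp u)"
  shows "zstar u v = (\<lambda>w. \<Sum>\<alpha>\<in>supp u. \<Sum>\<beta>\<in>supp v. u \<alpha> * v \<beta> * zstar (mono \<alpha>) (mono \<beta>) w)"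
proof
  fix w
  let ?Y = "\<lambda>\<alpha> i. \<Sum>\<beta>\<in>supp v. u \<alpha> * v \<beta> * ymon \<alpha> (int i - 1) \<beta> w"
  have Ymode: "Ymode (wcomp d u) p v w = (\<Sum>\<alpha>\<in>{\<alpha> \<in> supp u. wt \<alpha> = d}. \<Sum>\<beta>\<in>supp v. u \<alpha> * v \<beta> * ymon \<alpha> p \<beta> w)"
    for d p
    unfolding Ymode_def supp_wcomp by (rule sum.cong) (auto simp: wcomp_def)
  have "zstar u v w = (\<Sum>d\<in>wt ` supp u. \<Sum>i\<le>d. \<Sum>\<alpha>\<in>{\<alpha> \<in> supp u. wt \<alpha> = d}. of_nat (d choose i) * ?Y \<alpha> i)"
    by (simp add: zstar_def Ymode sum_distrib_left)
  also have "\<dots> = (\<Sum>d\<in>wt ` supp u. \<Sum>\<alpha>\<in>{\<alpha> \<in> supp u. wt \<alpha> = d}. \<Sum>i\<le>wt \<alpha>. of_nat (wt \<alpha> choose i) * ?Y \<alpha> i)"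
    by (rule sum.cong[OF refl], subst sum.swap) auto
  also have "\<dots> = (\<Sum>\<alpha>\<in>supp u. \<Sum>i\<le>wt \<alpha>. of_nat (wt \<alpha> choose i) * ?Y \<alpha> i)"
    by (rule sum.image_gen[OF fin, symmetric])
  also have "\<dots> = (\<Sum>\<alpha>\<in>supp u. \<Sum>\<beta>\<in>supp v. u \<alpha> * v \<beta> * zstar (mono \<alpha>) (mono \<beta>) w)"
    by (simp add: zstar_mono sum_distrib_left mult_ac sum.swap[of _ "{..wt _}"])
  finally show "zstar u v w = (\<Sum>\<alpha>\<in>supp u. \<Sum>\<beta>\<in>supp v. u \<alpha> * v \<beta> * zstar (mono \<alpha>) (mono \<beta>) w)" .
qed

lemma zstar_expand_superset:
  assumes "finite A" "supp u \<subseteq> A" "finite B" "supp v \<subseteq> B"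
  shows "zstar u v = (\<lambda>w. \<Sum>\<alpha>\<in>A. \<Sum>\<beta>\<in>B. u \<alpha> * v \<beta> * zstar (mono \<alpha>) (mono \<beta>) w)"
proof -
  have outside: "f \<notin> supp f' \<Longrightarrow> f' f = 0" for f and f' :: vec
    by (simp add: supp_def)
  show ?thesis
    unfolding zstar_expand[OF finite_subset[OF assms(2,1)]]
    by (intro ext sum.mono_neutral_cong_left assms) (auto simp: outside)
qed

section \<open>Congruence modulo O(H^+)\<close>

lemma cspan_generator: "x \<in> S \<Longrightarrow> x \<in> cspan S"
  unfolding cspan_def by (rule CollectI, rule exI[of _ "{x}"], rule exI[of _ "\<lambda>_. 1"]) auto

lemma cspan_zero: "(\<lambda>_. 0) \<in> cspan S"
  unfolding cspan_def by (rule CollectI, rule exI[of _ "{}"]) auto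

lemma cspan_sc: "x \<in> cspan S \<Longrightarrow> sc k x \<in> cspan S"
  unfolding cspan_def sc_def
  by (auto simp: sum_distrib_left mult.assoc intro!: exI[of _ "\<lambda>e. k * _ e"])

lemma cspan_add:
  assumes "x \<in> cspan S" "y \<in> cspan S"
  shows "x + y \<in> cspan S"
proof -
  obtain F c where F: "finite F" "F \<subseteq> S" "x = (\<lambda>m. \<Sum>e\<in>F. c e * e m)"
    using assms(1) unfolding cspan_def by blast
  obtain G d where G: "finite G" "G \<subseteq> S" "y = (\<lambda>m. \<Sum>e\<in>G. d e * e m)"
    using assms(2) unfolding cspan_def by blast
  define cd where "cd e = (if e \<in> F then c e else 0) + (if e \<in> G then d e else 0)" for e
  have "(\<Sum>e\<in>F \<union> G. cd e * e m)
      = (\<Sum>e\<in>F \<union> G. (if e \<in> F then c e * e m else 0) + (if e \<in> G then d e * e m else 0))" for m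
    by (rule sum.cong) (simp_all add: cd_def distrib_right)
  also have "\<dots> m = (\<Sum>e\<in>(F \<union> G) \<inter> F. c e * e m) + (\<Sum>e\<in>(F \<union> G) \<inter> G. d e * e m)" for m
    using F(1) G(1) by (simp only: sum.distrib sum.inter_restrict finite_Un)
  also have "\<dots> m = (\<Sum>e\<in>F. c e * e m) + (\<Sum>e\<in>G. d e * e m)" for m
    by (simp only: Un_Int_eq)
  finally have "x + y = (\<lambda>m. \<Sum>e\<in>F \<union> G. cd e * e m)"
    by (simp add: F(3) G(3) fun_eq_iff)
  then show ?thesis
    unfolding cspan_def using F G by blast
qed

lemma cspan_sum:
  "finite F \<Longrightarrow> (\<And>i. i \<in> F \<Longrightarrow> f i \<in> cspan S) \<Longrightarrow> (\<lambda>w. \<Sum>i\<in>F. k i * f i w) \<in> cspan S"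
proof (induction F rule: finite_induct)
  case empty
  show ?case by (simp add: cspan_zero)
next
  case (insert i F)
  have "(\<lambda>w. \<Sum>i\<in>insert i F. k i * f i w) = sc (k i) (f i) + (\<lambda>w. \<Sum>i\<in>F. k i * f i w)"
    using insert.hyps by (simp add: fun_eq_iff sc_def)
  then show ?case
    using insert by (simp add: cspan_add cspan_sc)
qed

lemma supp_cspan:
  assumes "\<And>e. e \<in> G \<Longrightarrow> supp e \<subseteq> A" "x \<in> cspan G"
  shows "supp x \<subseteq> A"
proof
  fix \<alpha> assume \<alpha>: "\<alpha> \<in> supp x"
  obtain F c where F: "F \<subseteq> G" "x = (\<lambda>m. \<Sum>e\<in>F. c e * e m)"
    using assms(2) unfolding cspan_def by blast
  show "\<alpha> \<in> A"
  proof (rule ccontr)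
    assume "\<alpha> \<notin> A"
    then have "e \<alpha> = 0" if "e \<in> F" for e
      using assms(1) F(1) that unfolding supp_def by blast
    then have "x \<alpha> = 0"
      using F(2) by (auto intro: sum.neutral)
    then show False
      using \<alpha> by (simp add: supp_def)
  qed
qed

definition zhu_equiv :: "nat \<Rightarrow> vec \<Rightarrow> vec \<Rightarrow> bool" where
  "zhu_equiv l u v \<longleftrightarrow> u - v \<in> Ozhu l"

lemma zhu_equiv_refl [simp]: "zhu_equiv l u u"
  using cspan_zero by (simp add: zhu_equiv_def Ozhu_def zero_fun_def)

lemma zhu_equiv_sc: "zhu_equiv l u v \<Longrightarrow> zhu_equiv l (sc k u) (sc k v)"
proof -
  have "sc k u - sc k v = sc k (u - v)"
    by (simp add: sc_def fun_eq_iff right_diff_distrib)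
  then show "zhu_equiv l u v \<Longrightarrow> zhu_equiv l (sc k u) (sc k v)"
    by (simp add: zhu_equiv_def Ozhu_def cspan_sc)
qed

lemma zhu_equiv_sym: "zhu_equiv l u v \<Longrightarrow> zhu_equiv l v u"
proof -
  have "v - u = sc (-1) (u - v)"
    by (simp add: sc_def fun_eq_iff)
  then show "zhu_equiv l u v \<Longrightarrow> zhu_equiv l v u"
    by (simp add: zhu_equiv_def Ozhu_def cspan_sc)
qed

lemma zhu_equiv_trans [trans]:
  assumes "zhu_equiv l u v" "zhu_equiv l v w"
  shows "zhu_equiv l u w"
proof -
  have "(u - v) + (v - w) \<in> Ozhu l"
    using assms unfolding zhu_equiv_def Ozhu_def by (rule cspan_add)
  then show ?thesis
    by (simp add: zhu_equiv_def)
qed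

lemma zhu_equiv_sum:
  assumes "finite F" "\<And>i. i \<in> F \<Longrightarrow> zhu_equiv l (f i) (g i)"
  shows "zhu_equiv l (\<lambda>w. \<Sum>i\<in>F. k i * f i w) (\<lambda>w. \<Sum>i\<in>F. k i * g i w)"
proof -
  have "(\<lambda>w. \<Sum>i\<in>F. k i * (f i - g i) w) \<in> Ozhu l"
    using assms unfolding zhu_equiv_def Ozhu_def by (rule cspan_sum)
  moreover have "(\<lambda>w. \<Sum>i\<in>F. k i * f i w) - (\<lambda>w. \<Sum>i\<in>F. k i * g i w) = (\<lambda>w. \<Sum>i\<in>F. k i * (f i - g i) w)"
    by (simp add: fun_eq_iff right_diff_distrib sum_subtractf)
  ultimately show ?thesis
    by (simp only: zhu_equiv_def)
qed

section \<open>Relations among four-index monomials\<close>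

lemma mono_pair_in_Hplus:
  assumes "i < l" "j < l" "1 \<le> n" "1 \<le> k"
  shows "mono {#(i, n), (j, k)#} \<in> Hplus l"
proof -
  have "theta (mono {#(i, n), (j, k)#}) = mono {#(i, n), (j, k)#}"
    by (auto simp: theta_def mono_def)
  then show ?thesis
    using assms by (auto simp: Hplus_def Hspace_def)
qed

lemma homogeneous_mono: "homogeneous (mono \<alpha>)"
  unfolding homogeneous_def by (auto simp: mono_def)

lemma zcirc_pairs_in_Ozhu:
  assumes "i < l" "j < l" "k < l" "m < l" "1 \<le> x" "1 \<le> y" "1 \<le> z" "1 \<le> w"
  shows "zcirc (mono {#(i, x), (j, y)#}) (mono {#(k, z), (m, w)#}) \<in> Ozhu l"
  unfolding Ozhu_def
  by (rule cspan_generator) (use assms mono_pair_in_Hplus homogeneous_mono in blast)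

text \<open>The circle products pairing \<open>i\<close> with \<open>j\<close>, \<open>i\<close> with \<open>k\<close> and \<open>j\<close> with \<open>k\<close>, combined with
  signs \<open>+, +, -\<close>, leave exactly \<open>2x\<close> times the relation.\<close>

lemma zhu_equiv_raise:
  assumes l: "i < l" "j < l" "k < l" "m < l" and distinct: "distinct [i, j, k, m]"
    and pos: "1 \<le> x" "1 \<le> y" "1 \<le> z" "1 \<le> w"
  shows "zhu_equiv l (mono {#(i, x + 1), (j, y), (k, z), (m, w)#})
                     (sc (-1) (mono {#(i, x), (j, y), (k, z), (m, w)#}))"
proof -
  let ?A0 = "mono {#(i, x), (j, y), (k, z), (m, w)#}"
  let ?Ai = "mono {#(i, x + 1), (j, y), (k, z), (m, w)#}"
  let ?Aj = "mono {#(i, x), (j, y + 1), (k, z), (m, w)#}"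
  let ?Ak = "mono {#(i, x), (j, y), (k, z + 1), (m, w)#}"
  let ?Rij = "zcirc (mono {#(i, x), (j, y)#}) (mono {#(k, z), (m, w)#})"
  let ?Rik = "zcirc (mono {#(i, x), (k, z)#}) (mono {#(j, y), (m, w)#})"
  let ?Rjk = "zcirc (mono {#(j, y), (k, z)#}) (mono {#(i, x), (m, w)#})"
  have "?Rij = sc (of_nat x) ?Ai + sc (of_nat y) ?Aj + sc (of_nat (x + y)) ?A0"
    using zcirc_pair[of i "{#(k, z), (m, w)#}" j x y] distinct pos by auto
  moreover have "?Rik = sc (of_nat x) ?Ai + sc (of_nat z) ?Ak + sc (of_nat (x + z)) ?A0"
    using zcirc_pair[of i "{#(j, y), (m, w)#}" k x z] distinct pos by (auto simp: add_mset_commute)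
  moreover have "?Rjk = sc (of_nat y) ?Aj + sc (of_nat z) ?Ak + sc (of_nat (y + z)) ?A0"
    using zcirc_pair[of j "{#(i, x), (m, w)#}" k y z] distinct pos by (auto simp: add_mset_commute)
  ultimately have "?Ai - sc (-1) ?A0 = sc (1 / (2 * of_nat x)) (?Rij + ?Rik + sc (-1) ?Rjk)"
    using pos by (auto simp: fun_eq_iff sc_def field_simps)
  moreover have "?Rij \<in> Ozhu l" "?Rik \<in> Ozhu l" "?Rjk \<in> Ozhu l"
    using l pos by (simp_all add: zcirc_pairs_in_Ozhu)
  ultimately show ?thesis
    unfolding zhu_equiv_def by (simp add: Ozhu_def cspan_sc cspan_add)
qed

lemma zhu_equiv_lower_to_one:
  assumes l: "i < l" "j < l" "k < l" "m < l" and distinct: "distinct [i, j, k, m]"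
    and pos: "1 \<le> x" "1 \<le> y" "1 \<le> z" "1 \<le> w"
  shows "zhu_equiv l (mono {#(i, x), (j, y), (k, z), (m, w)#})
                     (sc ((-1) ^ (x + 1)) (mono {#(i, 1), (j, y), (k, z), (m, w)#}))"
  using pos(1)
proof (induction x rule: nat_induct_at_least)
  case base
  show ?case
    by (simp add: sc_def)
next
  case (Suc x)
  have "zhu_equiv l (mono {#(i, x + 1), (j, y), (k, z), (m, w)#})
                    (sc (-1) (mono {#(i, x), (j, y), (k, z), (m, w)#}))"
    using zhu_equiv_raise[OF l distinct Suc.hyps pos(2-4)] .
  also have "zhu_equiv l \<dots> (sc (-1) (sc ((-1) ^ (x + 1)) (mono {#(i, 1), (j, y), (k, z), (m, w)#})))"
    using Suc.IH by (rule zhu_equiv_sc)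
  finally show ?case
    by (simp add: sc_def)
qed

lemma zhu_equiv_quad_to_ones:
  assumes l: "a < l" "b < l" "c < l" "d < l" and distinct: "distinct [a, b, c, d]"
    and pos: "1 \<le> x" "1 \<le> y" "1 \<le> z" "1 \<le> w"
  shows "zhu_equiv l (mono {#(a, x), (b, y), (c, z), (d, w)#})
                     (sc ((-1) ^ (x + y + z + w)) (mono {#(a, 1), (b, 1), (c, 1), (d, 1)#}))"
proof -
  have "zhu_equiv l (mono {#(a, x), (b, y), (c, z), (d, w)#})
                    (sc ((-1) ^ (x + 1)) (mono {#(a, 1), (b, y), (c, z), (d, w)#}))"
    by (rule zhu_equiv_lower_to_one) (use l distinct pos in auto)
  also have "zhu_equiv l \<dots> (sc ((-1) ^ (x + 1)) (sc ((-1) ^ (y + 1)) (mono {#(a, 1), (b, 1), (c, z), (d, w)#})))"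
    using zhu_equiv_lower_to_one[of b l a c d y 1 z w] l distinct pos
    by (intro zhu_equiv_sc) (simp add: add_mset_commute)
  also have "zhu_equiv l \<dots> (sc ((-1) ^ (x + 1)) (sc ((-1) ^ (y + 1)) (sc ((-1) ^ (z + 1))
                                (mono {#(a, 1), (b, 1), (c, 1), (d, w)#}))))"
    using zhu_equiv_lower_to_one[of c l a b d z 1 1 w] l distinct pos
    by (intro zhu_equiv_sc) (simp add: add_mset_commute)
  also have "zhu_equiv l \<dots> (sc ((-1) ^ (x + 1)) (sc ((-1) ^ (y + 1)) (sc ((-1) ^ (z + 1))
                                (sc ((-1) ^ (w + 1)) (mono {#(a, 1), (b, 1), (c, 1), (d, 1)#})))))"
    using zhu_equiv_lower_to_one[of d l a b c w 1 1 1] l distinct pos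
    by (intro zhu_equiv_sc) (simp add: add_mset_commute)
  also have "\<dots> = sc ((-1) ^ (x + y + z + w)) (mono {#(a, 1), (b, 1), (c, 1), (d, 1)#})"
    by (simp add: sc_def power_add mult.assoc)
  finally show ?thesis .
qed

lemma zstar_pairs_equiv:
  assumes l: "a < l" "b < l" "c < l" "d < l" and distinct: "distinct [a, b, c, d]"
    and pos: "1 \<le> p" "1 \<le> q" "1 \<le> r" "1 \<le> s"
  shows "zhu_equiv l (zstar (mono {#(a, p), (b, q)#}) (mono {#(c, r), (d, s)#}))
                     (sc ((-1) ^ (p + q + r + s)) (mono {#(a, 1), (b, 1), (c, 1), (d, 1)#}))"
proof -
  have "zstar (mono {#(a, p), (b, q)#}) (mono {#(c, r), (d, s)#}) = mono {#(a, p), (b, q), (c, r), (d, s)#}"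
    using distinct pos by (subst zstar_pair) auto
  then show ?thesis
    using zhu_equiv_quad_to_ones[OF l distinct pos] by simp
qed

section \<open>Signed coefficient sums\<close>

definition pair_box :: "nat \<Rightarrow> nat \<Rightarrow> nat \<Rightarrow> mon set" where
  "pair_box a b N = (\<lambda>(p, q). {#(a, p), (b, q)#}) ` ({1..N} \<times> {1..N})"

definition signed_sum :: "mon set \<Rightarrow> vec \<Rightarrow> complex" where
  "signed_sum S v = (\<Sum>\<alpha>\<in>S. (-1) ^ wt \<alpha> * v \<alpha>)"

lemma finite_pair_box [simp]: "finite (pair_box a b N)"
  by (simp add: pair_box_def)

lemma signed_sum_mono: "finite S \<Longrightarrow> signed_sum S (mono \<alpha>) = (if \<alpha> \<in> S then (-1) ^ wt \<alpha> else 0)"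
  by (simp add: signed_sum_def mono_def if_distrib cong: if_cong)

lemma signed_sum_sc [simp]: "signed_sum S (sc k v) = k * signed_sum S v"
  by (simp add: signed_sum_def sc_def sum_distrib_left mult_ac)

lemma signed_sum_add [simp]: "signed_sum S (u + v) = signed_sum S u + signed_sum S v"
  by (simp add: signed_sum_def sum.distrib distrib_left)

lemma signed_sum_cspan:
  assumes "\<And>e. e \<in> G \<Longrightarrow> signed_sum S e = 0" "x \<in> cspan G"
  shows "signed_sum S x = 0"
proof -
  obtain F c where F: "F \<subseteq> G" "x = (\<lambda>m. \<Sum>e\<in>F. c e * e m)"
    using assms(2) unfolding cspan_def by blast
  have "signed_sum S x = (\<Sum>e\<in>F. c e * signed_sum S e)"
    unfolding signed_sum_def F(2) by (simp add: sum_distrib_left mult_ac sum.swap[of _ S])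
  also have "\<dots> = 0"
    using assms(1) F(1) by (simp add: subset_iff)
  finally show ?thesis .
qed

lemma zstar_equiv_signed_sums:
  assumes l: "a < l" "b < l" "c < l" "d < l" and distinct: "distinct [a, b, c, d]"
    and supp: "supp u \<subseteq> pair_box a b N" "supp v \<subseteq> pair_box c d N'"
  shows "zhu_equiv l (zstar u v)
           (sc (signed_sum (pair_box a b N) u * signed_sum (pair_box c d N') v)
               (mono {#(a, 1), (b, 1), (c, 1), (d, 1)#}))"
proof -
  let ?A = "pair_box a b N" and ?B = "pair_box c d N'"
  let ?Q = "mono {#(a, 1), (b, 1), (c, 1), (d, 1)#}"
  let ?sign = "\<lambda>\<alpha> :: mon. (-1 :: complex) ^ wt \<alpha>"
  have expand: "zstar u v = (\<lambda>w. \<Sum>\<alpha>\<in>?A. u \<alpha> * (\<Sum>\<beta>\<in>?B. v \<beta> * zstar (mono \<alpha>) (mono \<beta>) w))"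
    unfolding zstar_expand_superset[OF finite_pair_box supp(1) finite_pair_box supp(2)]
    by (simp add: sum_distrib_left mult.assoc)
  have pairs: "zhu_equiv l (zstar (mono \<alpha>) (mono \<beta>)) (sc (?sign \<alpha> * ?sign \<beta>) ?Q)"
    if \<alpha>: "\<alpha> \<in> ?A" and \<beta>: "\<beta> \<in> ?B" for \<alpha> \<beta>
  proof -
    obtain p q r s where "\<alpha> = {#(a, p), (b, q)#}" "\<beta> = {#(c, r), (d, s)#}"
      and "1 \<le> p" "1 \<le> q" "1 \<le> r" "1 \<le> s"
      using \<alpha> \<beta> unfolding pair_box_def by fastforce
    then show ?thesis
      using zstar_pairs_equiv[OF l distinct] by (simp add: power_add mult.assoc)
  qed
  have equiv: "zhu_equiv l (\<lambda>w. \<Sum>\<alpha>\<in>?A. u \<alpha> * (\<Sum>\<beta>\<in>?B. v \<beta> * zstar (mono \<alpha>) (mono \<beta>) w))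
                           (\<lambda>w. \<Sum>\<alpha>\<in>?A. u \<alpha> * (\<Sum>\<beta>\<in>?B. v \<beta> * sc (?sign \<alpha> * ?sign \<beta>) ?Q w))"
    by (intro zhu_equiv_sum[OF finite_pair_box] pairs)
  have collect: "(\<lambda>w. \<Sum>\<alpha>\<in>?A. u \<alpha> * (\<Sum>\<beta>\<in>?B. v \<beta> * sc (?sign \<alpha> * ?sign \<beta>) ?Q w))
      = sc (signed_sum ?A u * signed_sum ?B v) ?Q"
    unfolding signed_sum_def sum_product
    by (simp add: fun_eq_iff sc_def sum_distrib_left sum_distrib_right mult_ac)
  show ?thesis
    using equiv unfolding expand collect .
qed

lemma zstar_in_Ozhu_if_signed_sum_zero:
  assumes "a < l" "b < l" "c < l" "d < l" "distinct [a, b, c, d]"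
    and "supp u \<subseteq> pair_box a b N" "supp v \<subseteq> pair_box c d N'"
    and "signed_sum (pair_box a b N) u = 0 \<or> signed_sum (pair_box c d N') v = 0"
  shows "zstar u v \<in> Ozhu l"
  using zstar_equiv_signed_sums[OF assms(1-7)] assms(8)
  by (auto simp: zhu_equiv_def sc_def simp flip: zero_fun_def)

lemma zstar_equiv_if_signed_sums_eq:
  assumes l: "a < l" "b < l" "c < l" "d < l" and distinct: "distinct [a, b, c, d]"
    and supp: "supp u \<subseteq> pair_box a b N" "supp v \<subseteq> pair_box c d N'"
              "supp u' \<subseteq> pair_box a b N" "supp v' \<subseteq> pair_box c d N'"
    and "signed_sum (pair_box a b N) u = signed_sum (pair_box a b N) u'"
        "signed_sum (pair_box c d N') v = signed_sum (pair_box c d N') v'"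
  shows "zhu_equiv l (zstar u v) (zstar u' v')"
  using zstar_equiv_signed_sums[OF l distinct supp(1,2)]
    zhu_equiv_sym[OF zstar_equiv_signed_sums[OF l distinct supp(3,4)]] assms(10,11)
  by (auto intro: zhu_equiv_trans)

lemma Sv_eq_mono: "1 \<le> n \<Longrightarrow> Sv x y n = mono {#(x, 1), (y, n)#}"
  by (simp add: Sv_def vac_def hmon_creation)

lemma mono_in_pair_box:
  assumes "p \<in> {1..N}" "q \<in> {1..N}"
  shows "{#(a, p), (b, q)#} \<in> pair_box a b N" "{#(b, q), (a, p)#} \<in> pair_box a b N"
  using assms by (auto simp: pair_box_def add_mset_commute intro!: image_eqI[of _ _ "(p, q)"])

lemma generators_supp:
  "supp (Eu a b) \<subseteq> pair_box a b 5" "supp (Eu b a) \<subseteq> pair_box a b 5"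
  "supp (Et a b) \<subseteq> pair_box a b 5" "supp (Et b a) \<subseteq> pair_box a b 5"
  "supp (Lam a b) \<subseteq> pair_box a b 5" "supp (Sv a b 1) \<subseteq> pair_box a b 5"
  by (auto simp: Eu_def Et_def Lam_def Sv_eq_mono supp_def sc_def mono_def mono_in_pair_box split: if_splits)

lemma generators_signed_sum:
  "signed_sum (pair_box a b 5) (Eu a b) = 0" "signed_sum (pair_box a b 5) (Eu b a) = 0"
  "signed_sum (pair_box a b 5) (Et a b) = 0" "signed_sum (pair_box a b 5) (Et b a) = 0"
  "signed_sum (pair_box a b 5) (Lam a b) = 1" "signed_sum (pair_box a b 5) (Sv a b 1) = 1"
  by (simp_all add: Eu_def Et_def Lam_def Sv_eq_mono signed_sum_mono mono_in_pair_box)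

lemma Mspace_supp: "x \<in> Mspace a b \<Longrightarrow> supp x \<subseteq> pair_box a b 5"
  unfolding Mspace_def by (rule supp_cspan) (use generators_supp[where a = a and b = b] in auto)

lemma Mbar_supp: "x \<in> Mbar a b \<Longrightarrow> supp x \<subseteq> pair_box a b 5"
  unfolding Mbar_def by (rule supp_cspan) (use generators_supp[where a = a and b = b] in auto)

lemma Mspace_signed_sum: "x \<in> Mspace a b \<Longrightarrow> signed_sum (pair_box a b 5) x = 0"
  unfolding Mspace_def by (rule signed_sum_cspan) (use generators_signed_sum[where a = a and b = b] in auto)

theorem lemma5p3:
  fixes l a b c d :: nat
  assumes "a < l" "b < l" "c < l" "d < l"
    and "distinct [a, b, c, d]"
  shows "(\<forall>x\<in>Mspace a b. \<forall>y\<in>Mbar c d. zstar x y \<in> Ozhu l)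
       \<and> (\<forall>x\<in>Mbar c d. \<forall>y\<in>Mspace a b. zstar x y \<in> Ozhu l)
       \<and> zstar (Lam a b) (Lam c d) - zstar (Sv a b 1) (Sv c d 1) \<in> Ozhu l"
proof (intro conjI ballI)
  fix x y assume "x \<in> Mspace a b" "y \<in> Mbar c d"
  then show "zstar x y \<in> Ozhu l"
    by (intro zstar_in_Ozhu_if_signed_sum_zero[OF assms, where N = 5 and N' = 5])
      (simp_all add: Mspace_supp Mbar_supp Mspace_signed_sum)
next
  have "distinct [c, d, a, b]"
    using assms(5) by auto
  fix x y assume "x \<in> Mbar c d" "y \<in> Mspace a b"
  then show "zstar x y \<in> Ozhu l"
    by (intro zstar_in_Ozhu_if_signed_sum_zero[OF assms(3,4,1,2) \<open>distinct [c, d, a, b]\<close>, where N = 5 and N' = 5])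
      (simp_all add: Mspace_supp Mbar_supp Mspace_signed_sum)
next
  show "zstar (Lam a b) (Lam c d) - zstar (Sv a b 1) (Sv c d 1) \<in> Ozhu l"
    using zstar_equiv_if_signed_sums_eq[OF assms generators_supp(5,5,6,6)] generators_signed_sum(5,6)
    by (simp add: zhu_equiv_def)
qed

end
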